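(* Let $0<\mu<1$, $0<\nu<1$, $C>0$, $N_0\in\mathbb Z$, and for $n\ge N_0$ let $F_n,G_n\in\mathbb R^{1\times4}$ and $H_n\in\mathbb R^{2\times4}$ satisfy $\|F_n\|,\|G_n\|,\|H_n\|\le C\nu^n$. Consider the system $$\xi_{n+1}=\mu\xi_n+F_n\zeta_n,\quad \eta_{n+1}=\mu^{-1}\eta_n+G_n\zeta_n,\quad \chi_{n+1}=\chi_n+H_n\zeta_n,$$ where $\xi_n,\eta_n\in\mathbb R$, $\chi_n\in\mathbb R^2$, $\zeta_n=(\xi_n,\eta_n,\chi_n)^T\in\mathbb R^4$. Then there is an integer $N\ge N_0$ such that for every $\xi^0\in\mathbb R$ and $\chi_+\in\mathbb R^2$ there exists a unique solution $\{\zeta_n\}_{n\ge N}$ of the system with $\xi_N=\xi^0$, $\chi_n\to\chi_+$, $\xi_n\to0$ and $\eta_n\to0$ as $n\to+\infty$. *)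

theory Defs
  imports "HOL-Analysis.Analysis"
begin

definition zeta :: "real \<Rightarrow> real \<Rightarrow> real^2 \<Rightarrow> real^4" where
  "zeta x y c = vector [x, y, c $ 1, c $ 2]"

text \<open>Row vectors F_n, G_n in R^(1x4) act by the inner product; H_n in R^(2x4) acts by
  matrix-vector multiplication.\<close>
definition solves_sys ::
  "real \<Rightarrow> (int \<Rightarrow> real^4) \<Rightarrow> (int \<Rightarrow> real^4) \<Rightarrow> (int \<Rightarrow> real^4^2) \<Rightarrow> int
    \<Rightarrow> (int \<Rightarrow> real) \<Rightarrow> (int \<Rightarrow> real) \<Rightarrow> (int \<Rightarrow> real^2) \<Rightarrow> bool" where
  "solves_sys \<mu> F G H N xi eta chi \<longleftrightarrow>
     (\<forall>n\<ge>N. xi (n + 1) = \<mu> * xi n + F n \<bullet> zeta (xi n) (eta n) (chi n)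
           \<and> eta (n + 1) = inverse \<mu> * eta n + G n \<bullet> zeta (xi n) (eta n) (chi n)
           \<and> chi (n + 1) = chi n + H n *v zeta (xi n) (eta n) (chi n))"

definition good_sol ::
  "real \<Rightarrow> (int \<Rightarrow> real^4) \<Rightarrow> (int \<Rightarrow> real^4) \<Rightarrow> (int \<Rightarrow> real^4^2) \<Rightarrow> int
    \<Rightarrow> real \<Rightarrow> real^2 \<Rightarrow> (int \<Rightarrow> real) \<Rightarrow> (int \<Rightarrow> real) \<Rightarrow> (int \<Rightarrow> real^2) \<Rightarrow> bool" where
  "good_sol \<mu> F G H N xi0 chip xi eta chi \<longleftrightarrow>
     solves_sys \<mu> F G H N xi eta chi \<and> xi N = xi0
     \<and> (chi \<longlongrightarrow> chip) at_top \<and> (xi \<longlongrightarrow> 0) at_top \<and> (eta \<longlongrightarrow> 0) at_top"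

end

theory Submission
  imports Defs
begin

text \<open>Variation of constants, with \<open>\<xi>\<close> summed forward from \<open>\<xi>\<^sub>N\<close> and \<open>\<eta>\<close>, \<open>\<chi>\<close> summed
  backward from \<open>+\<infinity>\<close> (where \<open>\<eta> \<rightarrow> 0\<close> and \<open>\<chi> \<rightarrow> \<chi>\<^sub>+\<close>), identifies the solutions with the
  prescribed data and limits with the bounded fixed points of an affine Lyapunov--Perron operator
  on sequences. Once \<open>N\<close> is so large that \<open>C \<nu>\<^sup>N\<close> is small, this operator is a
  \<open>1/2\<close>-contraction for the supremum distance, and Banach's fixed point theorem gives
  existence and uniqueness.\<close>

definition zeta_chi :: "real^4 \<Rightarrow> real^2" where
  "zeta_chi v = vector [v $ 3, v $ 4]"

lemma zeta_nth [simp]: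
  "zeta x y c $ 1 = x" "zeta x y c $ 2 = y" "zeta x y c $ 3 = c $ 1" "zeta x y c $ 4 = c $ 2"
  by (simp_all add: zeta_def vector_def)

lemma zeta_chi_zeta [simp]: "zeta_chi (zeta x y c) = c"
  by (simp add: zeta_chi_def vec_eq_iff forall_2 vector_def)

lemma zeta_components [simp]: "zeta (v $ 1) (v $ 2) (zeta_chi v) = v"
  by (simp add: zeta_chi_def vec_eq_iff forall_4 vector_def)

lemma zeta_add: "zeta x y c + zeta x' y' c' = zeta (x + x') (y + y') (c + c')"
  by (simp add: vec_eq_iff forall_4)

lemma zeta_diff: "zeta x y c - zeta x' y' c' = zeta (x - x') (y - y') (c - c')"
  by (simp add: vec_eq_iff forall_4)

lemma tendsto_zeta [tendsto_intros]:
  assumes "(x \<longlongrightarrow> x0) F" and "(y \<longlongrightarrow> y0) F" and "(c \<longlongrightarrow> c0) F"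
  shows "((\<lambda>t. zeta (x t) (y t) (c t)) \<longlongrightarrow> zeta x0 y0 c0) F"
proof (rule vec_tendstoI)
  fix i :: 4
  show "((\<lambda>t. zeta (x t) (y t) (c t) $ i) \<longlongrightarrow> zeta x0 y0 c0 $ i) F"
    using exhaust_4[of i] assms by (auto intro: tendsto_vec_nth)
qed

lemma norm_zeta_le: "norm (zeta x y c) \<le> \<bar>x\<bar> + \<bar>y\<bar> + 2 * norm c"
proof -
  have "norm (zeta x y c) \<le> \<bar>x\<bar> + \<bar>y\<bar> + \<bar>c $ 1\<bar> + \<bar>c $ 2\<bar>"
    using norm_le_l1_cart[of "zeta x y c"] by (simp add: sum_4)
  moreover have "\<bar>c $ 1\<bar> \<le> norm c" "\<bar>c $ 2\<bar> \<le> norm c"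
    by (simp_all add: component_le_norm_cart)
  ultimately show ?thesis
    by linarith
qed

lemma norm_matrix_vector_mult_le:
  fixes A :: "real^'n^'m"
  shows "norm (A *v x) \<le> CARD('m) * norm A * norm x"
proof -
  have "norm (A *v x) \<le> (\<Sum>i\<in>UNIV. \<bar>(A *v x) $ i\<bar>)"
    by (rule norm_le_l1_cart)
  also have "\<dots> \<le> (\<Sum>i\<in>(UNIV::'m set). norm A * norm x)"
  proof (rule sum_mono)
    fix i
    have "\<bar>(A *v x) $ i\<bar> \<le> norm (A $ i) * norm x"
      by (simp add: matrix_mult_dot Cauchy_Schwarz_ineq2)
    also have "\<dots> \<le> norm A * norm x"
      by (simp add: mult_right_mono Finite_Cartesian_Product.norm_nth_le)
    finally show "\<bar>(A *v x) $ i\<bar> \<le> norm A * norm x" .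
  qed
  finally show ?thesis
    by simp
qed

lemma summable_geometric_dominated:
  fixes u :: "nat \<Rightarrow> 'a::banach"
  assumes "0 \<le> \<nu>" "\<nu> < 1" and "\<And>i. norm (u i) \<le> c * \<nu> ^ i"
  shows "summable u" and "norm (suminf u) \<le> c / (1 - \<nu>)"
proof -
  have "(\<lambda>i. c * \<nu> ^ i) sums (c * (1 / (1 - \<nu>)))"
    using assms(1,2) by (intro sums_mult geometric_sums) auto
  then have geo: "(\<lambda>i. c * \<nu> ^ i) sums (c / (1 - \<nu>))"
    by simp
  show "summable u"
    using summable_comparison_test'[OF sums_summable[OF geo] assms(3)] .
  show "norm (suminf u) \<le> c / (1 - \<nu>)"
    using norm_suminf_le[OF assms(3) sums_summable[OF geo]] by (simp add: sums_unique[OF geo, symmetric])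
qed

lemma geometric_convolution_tendsto_0:
  fixes \<mu> \<nu> c :: real and e :: "nat \<Rightarrow> real"
  assumes "0 \<le> \<mu>" "\<mu> < 1" "0 < \<nu>" "\<nu> < 1" and "\<And>j. \<bar>e j\<bar> \<le> c * \<nu> ^ j"
  shows "(\<lambda>m. \<Sum>j<m. \<mu> ^ (m - Suc j) * e j) \<longlonglongrightarrow> 0"
proof (rule Lim_null_comparison)
  define \<rho> where "\<rho> = max \<mu> \<nu>"
  have \<rho>: "0 < \<rho>" "\<rho> < 1" "\<mu> \<le> \<rho>" "\<nu> \<le> \<rho>"
    using assms by (auto simp: \<rho>_def)
  have "0 \<le> c"
    using assms(5)[of 0] by simp
  have term_le: "\<bar>\<mu> ^ (m - Suc j) * e j\<bar> \<le> c / \<rho> * \<rho> ^ m" if "j < m" for j m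
  proof -
    have "\<mu> ^ (m - Suc j) \<le> \<rho> ^ (m - Suc j)"
      using \<rho>(3) assms(1) by (rule power_mono)
    moreover have "c * \<nu> ^ j \<le> c * \<rho> ^ j"
      using \<open>0 \<le> c\<close> \<rho>(4) assms(3) by (intro mult_left_mono power_mono) auto
    ultimately have "\<mu> ^ (m - Suc j) * \<bar>e j\<bar> \<le> \<rho> ^ (m - Suc j) * (c * \<rho> ^ j)"
      using assms(1) assms(5)[of j] \<rho>(1) by (intro mult_mono) auto
    moreover have "\<rho> ^ (m - Suc j) * (c * \<rho> ^ j) = c / \<rho> * \<rho> ^ m"
    proof -
      have "\<rho> ^ m = \<rho> ^ ((m - Suc j) + j) * \<rho>"
        using that by (simp add: power_Suc2[symmetric] Suc_diff_Suc)
      then show ?thesis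
        using \<rho>(1) by (simp add: power_add)
    qed
    ultimately show ?thesis
      using assms(1) by (simp add: abs_mult)
  qed
  have "norm (\<Sum>j<m. \<mu> ^ (m - Suc j) * e j) \<le> (\<Sum>j<m. c / \<rho> * \<rho> ^ m)" for m
    unfolding real_norm_def using term_le
    by (intro order_trans[OF sum_abs sum_mono]) simp
  also have "(\<Sum>j<m. c / \<rho> * \<rho> ^ m) = c / \<rho> * (of_nat m * \<rho> ^ m)" for m
    by simp
  finally show "\<forall>\<^sub>F m in sequentially. norm (\<Sum>j<m. \<mu> ^ (m - Suc j) * e j) \<le> c / \<rho> * (of_nat m * \<rho> ^ m)"
    by simp
  show "(\<lambda>m. c / \<rho> * (of_nat m * \<rho> ^ m)) \<longlonglongrightarrow> 0"
    using \<rho> by (intro tendsto_mult_right_zero powser_times_n_limit_0) simp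
qed

text \<open>The system from time \<open>N\<close> on, reindexed by \<open>m = n - N\<close>, for the state vectors
  \<open>s m = \<zeta>\<^sub>N\<^sub>+\<^sub>m\<close>.\<close>

definition nat_solution ::
  "real \<Rightarrow> (nat \<Rightarrow> real^4) \<Rightarrow> (nat \<Rightarrow> real^4) \<Rightarrow> (nat \<Rightarrow> real^4^2) \<Rightarrow> real \<Rightarrow> real^2
    \<Rightarrow> (nat \<Rightarrow> real^4) \<Rightarrow> bool" where
  "nat_solution \<mu> f g h a b s \<longleftrightarrow>
     s 0 $ 1 = a
     \<and> (\<forall>m. s (Suc m) $ 1 = \<mu> * s m $ 1 + f m \<bullet> s m
          \<and> s (Suc m) $ 2 = inverse \<mu> * s m $ 2 + g m \<bullet> s m
          \<and> zeta_chi (s (Suc m)) = zeta_chi (s m) + h m *v s m)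
     \<and> (\<lambda>m. s m $ 1) \<longlonglongrightarrow> 0 \<and> (\<lambda>m. s m $ 2) \<longlonglongrightarrow> 0 \<and> (\<lambda>m. zeta_chi (s m)) \<longlonglongrightarrow> b"

locale small_perturbation =
  fixes \<mu> \<nu> K :: real and f g :: "nat \<Rightarrow> real^4" and h :: "nat \<Rightarrow> real^4^2"
  assumes mu: "0 < \<mu>" "\<mu> < 1" and nu: "0 < \<nu>" "\<nu> < 1"
    and K: "0 \<le> K" "K \<le> (1 - \<nu>) / 12"
    and norm_f: "\<And>j. norm (f j) \<le> K * \<nu> ^ j"
    and norm_g: "\<And>j. norm (g j) \<le> K * \<nu> ^ j"
    and norm_h: "\<And>j. norm (h j) \<le> K * \<nu> ^ j"
begin

definition forward_xi :: "(nat \<Rightarrow> real^4) \<Rightarrow> nat \<Rightarrow> real" where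
  "forward_xi z m = (\<Sum>j<m. \<mu> ^ (m - Suc j) * (f j \<bullet> z j))"

definition backward_eta :: "(nat \<Rightarrow> real^4) \<Rightarrow> nat \<Rightarrow> real" where
  "backward_eta z m = - (\<Sum>i. \<mu> ^ Suc i * (g (m + i) \<bullet> z (m + i)))"

definition backward_chi :: "(nat \<Rightarrow> real^4) \<Rightarrow> nat \<Rightarrow> real^2" where
  "backward_chi z m = - (\<Sum>i. h (m + i) *v z (m + i))"

definition perturbation :: "(nat \<Rightarrow> real^4) \<Rightarrow> nat \<Rightarrow> real^4" where
  "perturbation z m = zeta (forward_xi z m) (backward_eta z m) (backward_chi z m)"

definition lyapunov_perron :: "real \<Rightarrow> real^2 \<Rightarrow> (nat \<Rightarrow> real^4) \<Rightarrow> nat \<Rightarrow> real^4" where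
  "lyapunov_perron a b z m = zeta (\<mu> ^ m * a + forward_xi z m) (backward_eta z m) (b + backward_chi z m)"

lemma lyapunov_perron_eq: "lyapunov_perron a b z m = zeta (\<mu> ^ m * a) 0 b + perturbation z m"
  by (simp add: lyapunov_perron_def perturbation_def zeta_add)

lemma forward_xi_0 [simp]: "forward_xi z 0 = 0"
  by (simp add: forward_xi_def)

lemma forward_xi_Suc: "forward_xi z (Suc m) = \<mu> * forward_xi z m + f m \<bullet> z m"
proof -
  have "\<mu> ^ (Suc m - Suc j) = \<mu> * \<mu> ^ (m - Suc j)" if "j < m" for j
  proof -
    have "Suc m - Suc j = Suc (m - Suc j)"
      using that by simp
    then show ?thesis
      by simp
  qed
  then show ?thesis
    by (simp add: forward_xi_def sum_distrib_left mult.assoc)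
qed

context
  fixes z :: "nat \<Rightarrow> real^4" and B :: real
  assumes norm_z: "\<And>k. norm (z k) \<le> B"
begin

lemma bound_nonneg: "0 \<le> B"
  by (rule order_trans[OF norm_ge_zero norm_z])

lemma abs_inner_le:
  assumes "\<And>j. norm (p j) \<le> K * \<nu> ^ j"
  shows "\<bar>p j \<bullet> z j\<bar> \<le> K * B * \<nu> ^ j"
proof -
  have "\<bar>p j \<bullet> z j\<bar> \<le> norm (p j) * norm (z j)"
    by (rule Cauchy_Schwarz_ineq2)
  also have "\<dots> \<le> K * \<nu> ^ j * B"
    using assms norm_z K nu by (intro mult_mono) auto
  finally show ?thesis
    by (simp add: ac_simps)
qed

lemma norm_h_mult_le: "norm (h j *v z j) \<le> 2 * K * B * \<nu> ^ j"
proof -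
  have "norm (h j *v z j) \<le> 2 * norm (h j) * norm (z j)"
    using norm_matrix_vector_mult_le[of "h j" "z j"] by simp
  also have "\<dots> \<le> 2 * (K * \<nu> ^ j) * B"
    using norm_h norm_z K nu by (intro mult_mono) auto
  finally show ?thesis
    by (simp add: ac_simps)
qed

lemma
  shows summable_backward_eta: "summable (\<lambda>i. \<mu> ^ Suc i * (g (m + i) \<bullet> z (m + i)))"
    and abs_backward_eta_le: "\<bar>backward_eta z m\<bar> \<le> K * B * \<nu> ^ m / (1 - \<nu>)"
proof -
  have "norm (\<mu> ^ Suc i * (g (m + i) \<bullet> z (m + i))) \<le> (K * B * \<nu> ^ m) * \<nu> ^ i" for i
  proof -
    have "\<mu> ^ Suc i \<le> 1"
      using mu by (intro power_le_one) auto
    then have "\<mu> ^ Suc i * \<bar>g (m + i) \<bullet> z (m + i)\<bar> \<le> 1 * (K * B * \<nu> ^ (m + i))"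
      using mu abs_inner_le[OF norm_g] by (intro mult_mono) auto
    then show ?thesis
      using mu by (simp add: abs_mult power_add)
  qed
  from summable_geometric_dominated[OF _ nu(2) this] nu(1)
  show "summable (\<lambda>i. \<mu> ^ Suc i * (g (m + i) \<bullet> z (m + i)))"
    and "\<bar>backward_eta z m\<bar> \<le> K * B * \<nu> ^ m / (1 - \<nu>)"
    by (simp_all add: backward_eta_def)
qed

lemma
  shows summable_backward_chi: "summable (\<lambda>i. h (m + i) *v z (m + i))"
    and norm_backward_chi_le: "norm (backward_chi z m) \<le> 2 * K * B * \<nu> ^ m / (1 - \<nu>)"
proof -
  have "norm (h (m + i) *v z (m + i)) \<le> (2 * K * B * \<nu> ^ m) * \<nu> ^ i" for i
    using norm_h_mult_le[of "m + i"] by (simp add: power_add ac_simps)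
  from summable_geometric_dominated[OF _ nu(2) this] nu(1)
  show "summable (\<lambda>i. h (m + i) *v z (m + i))"
    and "norm (backward_chi z m) \<le> 2 * K * B * \<nu> ^ m / (1 - \<nu>)"
    by (simp_all add: backward_chi_def)
qed

lemma abs_forward_xi_le: "\<bar>forward_xi z m\<bar> \<le> K * B / (1 - \<nu>)"
proof -
  have "\<bar>forward_xi z m\<bar> \<le> (\<Sum>j<m. \<bar>\<mu> ^ (m - Suc j) * (f j \<bullet> z j)\<bar>)"
    unfolding forward_xi_def by (rule sum_abs)
  also have "\<dots> \<le> (\<Sum>j<m. K * B * \<nu> ^ j)"
  proof (rule sum_mono)
    fix j
    have "\<mu> ^ (m - Suc j) \<le> 1"
      using mu by (simp add: power_le_one)
    then have "\<mu> ^ (m - Suc j) * \<bar>f j \<bullet> z j\<bar> \<le> 1 * (K * B * \<nu> ^ j)"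
      using mu abs_inner_le[OF norm_f] by (intro mult_mono) auto
    then show "\<bar>\<mu> ^ (m - Suc j) * (f j \<bullet> z j)\<bar> \<le> K * B * \<nu> ^ j"
      using mu by (simp add: abs_mult)
  qed
  also have "\<dots> \<le> K * B / (1 - \<nu>)"
  proof -
    have "(\<lambda>j. K * B * \<nu> ^ j) sums (K * B * (1 / (1 - \<nu>)))"
      using nu by (intro sums_mult geometric_sums) auto
    moreover have "0 \<le> K * B * \<nu> ^ j" for j
      using K bound_nonneg nu by simp
    ultimately show ?thesis
      using sum_le_suminf[of "\<lambda>j. K * B * \<nu> ^ j" "{..<m}"] by (simp add: sums_iff)
  qed
  finally show ?thesis .
qed

lemma backward_eta_Suc: "backward_eta z (Suc m) = inverse \<mu> * backward_eta z m + g m \<bullet> z m"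
proof -
  define v where "v i = \<mu> ^ Suc i * (g (m + i) \<bullet> z (m + i))" for i
  have "(\<lambda>i. v (Suc i)) = (\<lambda>i. \<mu> * (\<mu> ^ Suc i * (g (Suc m + i) \<bullet> z (Suc m + i))))"
    by (simp add: v_def mult.assoc)
  then have "(\<Sum>i. v (Suc i)) = - \<mu> * backward_eta z (Suc m)"
    using suminf_mult[OF summable_backward_eta[of "Suc m"], of \<mu>] by (simp add: backward_eta_def)
  moreover have "(\<Sum>i. v (Suc i)) = - backward_eta z m - \<mu> * (g m \<bullet> z m)"
    using suminf_split_head[OF summable_backward_eta[of m]] by (simp add: v_def backward_eta_def)
  ultimately show ?thesis
    using mu by (simp add: field_simps)
qed

lemma backward_chi_Suc: "backward_chi z (Suc m) = backward_chi z m + h m *v z m"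
  using suminf_split_head[OF summable_backward_chi[of m]] by (simp add: backward_chi_def)

lemma forward_xi_tendsto: "(\<lambda>m. \<mu> ^ m * a + forward_xi z m) \<longlonglongrightarrow> 0"
proof -
  have "(\<lambda>m. \<mu> ^ m * a + forward_xi z m) \<longlonglongrightarrow> 0 * a + 0"
    unfolding forward_xi_def using mu nu abs_inner_le[OF norm_f]
    by (intro tendsto_intros LIMSEQ_power_zero geometric_convolution_tendsto_0[where \<nu>=\<nu>]) auto
  then show ?thesis
    by simp
qed

lemma backward_eta_tendsto: "backward_eta z \<longlonglongrightarrow> 0"
proof (rule Lim_null_comparison)
  show "\<forall>\<^sub>F m in sequentially. norm (backward_eta z m) \<le> K * B / (1 - \<nu>) * \<nu> ^ m"
    using abs_backward_eta_le by simp
  show "(\<lambda>m. K * B / (1 - \<nu>) * \<nu> ^ m) \<longlonglongrightarrow> 0"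
    using nu by (intro tendsto_mult_right_zero LIMSEQ_power_zero) auto
qed

lemma backward_chi_tendsto: "backward_chi z \<longlonglongrightarrow> 0"
proof (rule Lim_null_comparison)
  show "\<forall>\<^sub>F m in sequentially. norm (backward_chi z m) \<le> 2 * K * B / (1 - \<nu>) * \<nu> ^ m"
    using norm_backward_chi_le by simp
  show "(\<lambda>m. 2 * K * B / (1 - \<nu>) * \<nu> ^ m) \<longlonglongrightarrow> 0"
    using nu by (intro tendsto_mult_right_zero LIMSEQ_power_zero) auto
qed

lemma norm_perturbation_le: "norm (perturbation z m) \<le> B / 2"
proof -
  define X where "X = K * B / (1 - \<nu>)"
  have "K * B \<le> (1 - \<nu>) / 12 * B"
    using K bound_nonneg by (intro mult_right_mono) auto
  then have X: "X \<le> B / 12"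
    using nu by (simp add: X_def field_simps)
  have "K * B * \<nu> ^ m \<le> K * B * 1"
    using K bound_nonneg nu by (intro mult_left_mono power_le_one) auto
  then have tail: "K * B * \<nu> ^ m / (1 - \<nu>) \<le> X"
    using nu by (simp add: X_def divide_right_mono)
  have "\<bar>backward_eta z m\<bar> \<le> X"
    using abs_backward_eta_le[of m] tail by linarith
  moreover have "norm (backward_chi z m) \<le> 2 * X"
    using norm_backward_chi_le[of m] tail by (simp add: mult.assoc)
  moreover have "\<bar>forward_xi z m\<bar> \<le> X"
    unfolding X_def by (rule abs_forward_xi_le)
  ultimately show ?thesis
    using norm_zeta_le[of "forward_xi z m" "backward_eta z m" "backward_chi z m"] X
    by (simp add: perturbation_def)
qed

end

lemma perturbation_diff:
  assumes "\<And>k. norm (z k) \<le> B" and "\<And>k. norm (w k) \<le> B'"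
  shows "perturbation (\<lambda>k. z k - w k) m = perturbation z m - perturbation w m"
proof -
  have "forward_xi (\<lambda>k. z k - w k) m = forward_xi z m - forward_xi w m"
    by (simp add: forward_xi_def inner_diff_right right_diff_distrib sum_subtractf)
  moreover have "backward_eta (\<lambda>k. z k - w k) m = backward_eta z m - backward_eta w m"
    using suminf_diff[OF summable_backward_eta[where z=z and m=m, OF assms(1)] summable_backward_eta[where z=w and m=m, OF assms(2)]]
    by (simp add: backward_eta_def inner_diff_right right_diff_distrib)
  moreover have "(\<Sum>i. h (m + i) *v (z (m + i) - w (m + i)))
      = (\<Sum>i. h (m + i) *v z (m + i)) - (\<Sum>i. h (m + i) *v w (m + i))"
    unfolding matrix_vector_mult_diff_distrib
    by (intro suminf_diff[symmetric] summable_backward_chi[OF assms(1)] summable_backward_chi[OF assms(2)])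
  then have "backward_chi (\<lambda>k. z k - w k) m = backward_chi z m - backward_chi w m"
    by (simp add: backward_chi_def)
  ultimately show ?thesis
    by (simp add: perturbation_def zeta_diff)
qed

lemma norm_lyapunov_perron_diff_le:
  assumes "\<And>k. norm (z k) \<le> B" and "\<And>k. norm (w k) \<le> B'" and "\<And>k. norm (z k - w k) \<le> d"
  shows "norm (lyapunov_perron a b z m - lyapunov_perron a b w m) \<le> d / 2"
  using norm_perturbation_le[where z="\<lambda>k. z k - w k", OF assms(3)] perturbation_diff[OF assms(1,2)]
  by (simp add: lyapunov_perron_eq)

lemma norm_lyapunov_perron_le:
  assumes "\<And>k. norm (z k) \<le> B"
  shows "norm (lyapunov_perron a b z m) \<le> \<bar>a\<bar> + 2 * norm b + B / 2"
proof -
  have "\<bar>\<mu> ^ m * a\<bar> \<le> \<bar>a\<bar>"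
    using mu by (simp add: abs_mult power_le_one mult_left_le_one_le)
  then have "norm (zeta (\<mu> ^ m * a) 0 b) \<le> \<bar>a\<bar> + 2 * norm b"
    using norm_zeta_le[of "\<mu> ^ m * a" 0 b] by simp
  then show ?thesis
    using norm_perturbation_le[where z=z, OF assms, of m] norm_triangle_ineq[of "zeta (\<mu> ^ m * a) 0 b" "perturbation z m"]
    by (simp add: lyapunov_perron_eq)
qed

lemma ex1_bounded_fixpoint: "\<exists>!s. bounded (range s) \<and> lyapunov_perron a b s = s"
proof -
  let ?S = "Met_TC.fspace (UNIV :: nat set) :: (nat \<Rightarrow> real^4) set"
  let ?d = "Met_TC.fdist (UNIV :: nat set) :: (nat \<Rightarrow> real^4) \<Rightarrow> _"
  interpret S: Metric_space ?S ?d
    by (rule Met_TC.Metric_space_funspace)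
  have in_S: "s \<in> ?S \<longleftrightarrow> bounded (range s)" for s
    by (simp add: Met_TC.fspace_def)
  have "mcomplete_of (funspace (UNIV :: nat set) (Met_TC.Self :: (real^4) metric))"
    by (rule Met_TC.mcomplete_funspace) (simp add: complete_UNIV)
  then have "S.mcomplete"
    by (simp add: mcomplete_of_def)
  have norm_le_iff: "?d s t \<le> e \<longleftrightarrow> (\<forall>k. norm (s k - t k) \<le> e)" if "s \<in> ?S" "t \<in> ?S" for s t e
    using Met_TC.funspace_mdist_le[OF that] by (simp add: dist_norm)
  have maps_to: "lyapunov_perron a b s \<in> ?S" if s: "s \<in> ?S" for s
  proof -
    obtain B where B: "\<And>k. norm (s k) \<le> B"
      using s by (auto simp: in_S bounded_iff)
    show ?thesis
      using norm_lyapunov_perron_le[where z=s and a=a and b=b, OF B]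
      by (auto simp: in_S bounded_iff)
  qed
  have contraction: "?d (lyapunov_perron a b s) (lyapunov_perron a b t) \<le> 1/2 * ?d s t"
    if st: "s \<in> ?S" "t \<in> ?S" for s t
  proof -
    obtain B B' where "\<And>k. norm (s k) \<le> B" and "\<And>k. norm (t k) \<le> B'"
      using st by (auto simp: in_S bounded_iff)
    moreover have "\<And>k. norm (s k - t k) \<le> ?d s t"
      using norm_le_iff[OF st] by blast
    ultimately have "norm (lyapunov_perron a b s k - lyapunov_perron a b t k) \<le> ?d s t / 2" for k
      by (rule norm_lyapunov_perron_diff_le)
    then show ?thesis
      unfolding norm_le_iff[OF maps_to[OF st(1)] maps_to[OF st(2)]] by simp
  qed
  have "?S \<noteq> {}"
    using in_S[of "\<lambda>_. 0"] by auto
  then obtain s where "s \<in> ?S" and "lyapunov_perron a b s = s"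
    using S.Banach_fixedpoint_thm[OF \<open>S.mcomplete\<close> _ _ _ contraction] maps_to by auto
  moreover have "t = s" if "t \<in> ?S" "lyapunov_perron a b t = t" for t
    using S.contraction_imp_unique_fixpoint[of "lyapunov_perron a b" t s "1/2"] that
      \<open>s \<in> ?S\<close> \<open>lyapunov_perron a b s = s\<close> maps_to contraction by auto
  ultimately show ?thesis
    unfolding in_S by blast
qed

lemma bounded_fixpoint_imp_nat_solution:
  assumes "bounded (range s)" and fp: "lyapunov_perron a b s = s"
  shows "nat_solution \<mu> f g h a b s"
proof -
  obtain B where B: "\<And>k. norm (s k) \<le> B"
    using assms(1) by (auto simp: bounded_iff)
  have "s m = lyapunov_perron a b s m" for m
    using fp by simp
  then have xi: "s m $ 1 = \<mu> ^ m * a + forward_xi s m"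
    and eta: "s m $ 2 = backward_eta s m"
    and chi: "zeta_chi (s m) = b + backward_chi s m" for m
    by (metis lyapunov_perron_def zeta_nth(1,2) zeta_chi_zeta)+
  show ?thesis
    unfolding nat_solution_def xi eta chi
    using backward_eta_Suc[where z=s, OF B] backward_chi_Suc[where z=s, OF B]
      forward_xi_tendsto[where z=s, OF B] backward_eta_tendsto[where z=s, OF B]
      tendsto_add[OF tendsto_const backward_chi_tendsto[where z=s, OF B], of b]
    by (simp add: forward_xi_Suc algebra_simps)
qed

lemma nat_solution_bounded:
  assumes "nat_solution \<mu> f g h a b s"
  shows "bounded (range s)"
proof -
  have "(\<lambda>m. zeta (s m $ 1) (s m $ 2) (zeta_chi (s m))) \<longlonglongrightarrow> zeta 0 0 b"
    using assms by (intro tendsto_zeta) (auto simp: nat_solution_def)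
  then show ?thesis
    by (simp add: convergent_imp_bounded)
qed

lemma nat_solution_imp_fixpoint:
  assumes "nat_solution \<mu> f g h a b s"
  shows "lyapunov_perron a b s = s"
proof -
  have xi_0: "s 0 $ 1 = a"
    and xi_Suc: "\<And>m. s (Suc m) $ 1 = \<mu> * s m $ 1 + f m \<bullet> s m"
    and eta_Suc: "\<And>m. s (Suc m) $ 2 = inverse \<mu> * s m $ 2 + g m \<bullet> s m"
    and chi_Suc: "\<And>m. zeta_chi (s (Suc m)) = zeta_chi (s m) + h m *v s m"
    and eta_lim: "(\<lambda>m. s m $ 2) \<longlonglongrightarrow> 0" and chi_lim: "(\<lambda>m. zeta_chi (s m)) \<longlonglongrightarrow> b"
    using assms by (auto simp: nat_solution_def)
  have xi: "s m $ 1 = \<mu> ^ m * a + forward_xi s m" for m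
    by (induction m) (simp_all add: xi_0 xi_Suc forward_xi_Suc algebra_simps)
  have eta: "s m $ 2 = backward_eta s m" for m
  proof -
    have "(\<lambda>k. \<mu> ^ k * s (m + k) $ 2) \<longlonglongrightarrow> 0 * 0"
      using mu LIMSEQ_ignore_initial_segment[OF eta_lim, of m]
      by (intro tendsto_mult LIMSEQ_power_zero) (auto simp: add.commute)
    from telescope_sums[OF this[simplified]]
    have "(\<lambda>k. \<mu> ^ Suc k * (g (m + k) \<bullet> s (m + k))) sums (- s m $ 2)"
      using eta_Suc mu by (simp add: field_simps)
    then show ?thesis
      by (simp add: backward_eta_def sums_iff)
  qed
  have chi: "zeta_chi (s m) = b + backward_chi s m" for m
  proof -
    have "(\<lambda>k. zeta_chi (s (m + k))) \<longlonglongrightarrow> b"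
      using LIMSEQ_ignore_initial_segment[OF chi_lim, of m] by (simp add: add.commute)
    from telescope_sums[OF this]
    have "(\<lambda>k. h (m + k) *v s (m + k)) sums (b - zeta_chi (s m))"
      using chi_Suc by simp
    then show ?thesis
      by (simp add: backward_chi_def sums_iff)
  qed
  show ?thesis
  proof
    fix m
    show "lyapunov_perron a b s m = s m"
      using zeta_components[of "s m"] by (simp add: lyapunov_perron_def xi eta chi)
  qed
qed

theorem ex1_nat_solution: "\<exists>!s. nat_solution \<mu> f g h a b s"
  using ex1_bounded_fixpoint[of a b] bounded_fixpoint_imp_nat_solution nat_solution_bounded
    nat_solution_imp_fixpoint
  by metis

end

lemma all_int_ge_iff_all_nat: "(\<forall>n\<ge>N. P n) \<longleftrightarrow> (\<forall>m. P (N + int m))"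
proof
  assume all_nat: "\<forall>m. P (N + int m)"
  show "\<forall>n\<ge>N. P n"
  proof (intro allI impI)
    fix n
    assume "N \<le> n"
    then have "n = N + int (nat (n - N))"
      by simp
    then show "P n"
      using all_nat by metis
  qed
qed auto

lemma filterlim_int_shift_sequentially: "filterlim (\<lambda>m::nat. N + int m) at_top sequentially"
  unfolding filterlim_at_top eventually_sequentially
proof
  fix Z :: int
  show "\<exists>m0. \<forall>m\<ge>m0. Z \<le> N + int m"
    by (rule exI[of _ "nat (Z - N)"]) auto
qed

lemma filterlim_nat_shift_at_top: "filterlim (\<lambda>k::int. nat (k - N)) sequentially at_top"
  unfolding filterlim_at_top eventually_at_top_linorder
proof
  fix Z :: nat
  show "\<exists>k0. \<forall>k\<ge>k0. Z \<le> nat (k - N)"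
    by (rule exI[of _ "N + int Z"]) auto
qed

lemma good_sol_imp_nat_solution:
  assumes "good_sol \<mu> F G H N a b xi eta chi"
  shows "nat_solution \<mu> (\<lambda>j. F (N + int j)) (\<lambda>j. G (N + int j)) (\<lambda>j. H (N + int j)) a b
           (\<lambda>m. zeta (xi (N + int m)) (eta (N + int m)) (chi (N + int m)))"
proof -
  have sys: "solves_sys \<mu> F G H N xi eta chi" and "xi N = a"
    and lim: "(xi \<longlongrightarrow> 0) at_top" "(eta \<longlongrightarrow> 0) at_top" "(chi \<longlongrightarrow> b) at_top"
    using assms by (auto simp: good_sol_def)
  have "((\<lambda>m. u (N + int m)) \<longlongrightarrow> l) sequentially" if "(u \<longlongrightarrow> l) at_top"
    for u :: "int \<Rightarrow> 'a::topological_space" and l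
    using filterlim_compose[OF that filterlim_int_shift_sequentially] .
  then have "(\<lambda>m. xi (N + int m)) \<longlonglongrightarrow> 0" "(\<lambda>m. eta (N + int m)) \<longlonglongrightarrow> 0"
    "(\<lambda>m. chi (N + int m)) \<longlonglongrightarrow> b"
    using lim by auto
  then show ?thesis
    using sys \<open>xi N = a\<close>
    by (simp add: nat_solution_def solves_sys_def all_int_ge_iff_all_nat ac_simps)
qed

lemma nat_solution_imp_good_sol:
  assumes "nat_solution \<mu> (\<lambda>j. F (N + int j)) (\<lambda>j. G (N + int j)) (\<lambda>j. H (N + int j)) a b s"
  shows "good_sol \<mu> F G H N a b (\<lambda>k. s (nat (k - N)) $ 1) (\<lambda>k. s (nat (k - N)) $ 2)
           (\<lambda>k. zeta_chi (s (nat (k - N))))"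
proof -
  have "((\<lambda>k. u (nat (k - N))) \<longlongrightarrow> l) at_top" if "u \<longlonglongrightarrow> l"
    for u :: "nat \<Rightarrow> 'a::topological_space" and l
    using filterlim_compose[OF that filterlim_nat_shift_at_top] .
  then have "((\<lambda>k. s (nat (k - N)) $ 1) \<longlongrightarrow> 0) at_top" "((\<lambda>k. s (nat (k - N)) $ 2) \<longlongrightarrow> 0) at_top"
    "((\<lambda>k. zeta_chi (s (nat (k - N)))) \<longlongrightarrow> b) at_top"
    using assms by (auto simp: nat_solution_def)
  moreover have "nat (N + int m + 1 - N) = Suc m" for m
    by simp
  ultimately show ?thesis
    using assms by (simp add: good_sol_def nat_solution_def solves_sys_def all_int_ge_iff_all_nat)
qed

lemma small_perturbation_tail:
  fixes C :: real and F G :: "int \<Rightarrow> real^4" and H :: "int \<Rightarrow> real^4^2"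
  assumes "0 < \<mu>" "\<mu> < 1" "0 < \<nu>" "\<nu> < 1" "0 < C"
    and "\<forall>n\<ge>N0. norm (F n) \<le> C * \<nu> powi n"
    and "\<forall>n\<ge>N0. norm (G n) \<le> C * \<nu> powi n"
    and "\<forall>n\<ge>N0. norm (H n) \<le> C * \<nu> powi n"
  obtains N where "N0 \<le> N"
    and "small_perturbation \<mu> \<nu> (C * \<nu> powi N) (\<lambda>j. F (N + int j)) (\<lambda>j. G (N + int j)) (\<lambda>j. H (N + int j))"
proof -
  obtain p where p: "\<nu> ^ p < (1 - \<nu>) / (12 * (C * \<nu> powi N0))"
    using real_arch_pow_inv[of "(1 - \<nu>) / (12 * (C * \<nu> powi N0))" \<nu>] assms(3-5) by auto
  define N where "N = N0 + int p"
  have "C * \<nu> powi N = C * \<nu> powi N0 * \<nu> ^ p"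
    using assms(3) by (simp add: N_def power_int_add)
  then have small: "C * \<nu> powi N \<le> (1 - \<nu>) / 12"
    using p assms(3,5) by (simp add: field_simps)
  have bound: "norm (X (N + int j)) \<le> C * \<nu> powi N * \<nu> ^ j"
    if "\<forall>n\<ge>N0. norm (X n) \<le> C * \<nu> powi n" for X :: "int \<Rightarrow> 'a::real_normed_vector" and j
  proof -
    have "N0 \<le> N + int j"
      by (simp add: N_def)
    then have "norm (X (N + int j)) \<le> C * \<nu> powi (N + int j)"
      using that by blast
    also have "\<dots> = C * \<nu> powi N * \<nu> ^ j"
      using assms(3) by (simp add: power_int_add)
    finally show ?thesis .
  qed
  show thesis
  proof (rule that)
    show "N0 \<le> N"
      by (simp add: N_def)
    show "small_perturbation \<mu> \<nu> (C * \<nu> powi N) (\<lambda>j. F (N + int j)) (\<lambda>j. G (N + int j)) (\<lambda>j. H (N + int j))"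
      using assms(1-5) small bound[OF assms(6)] bound[OF assms(7)] bound[OF assms(8)]
      by unfold_locales auto
  qed
qed

context
  fixes \<mu> \<nu> K :: real and N :: int and F G :: "int \<Rightarrow> real^4" and H :: "int \<Rightarrow> real^4^2"
  assumes small: "small_perturbation \<mu> \<nu> K (\<lambda>j. F (N + int j)) (\<lambda>j. G (N + int j)) (\<lambda>j. H (N + int j))"
begin

interpretation small_perturbation \<mu> \<nu> K "\<lambda>j. F (N + int j)" "\<lambda>j. G (N + int j)" "\<lambda>j. H (N + int j)"
  by (rule small)

lemma good_sol_exists: "\<exists>xi eta chi. good_sol \<mu> F G H N a b xi eta chi"
  using ex1_nat_solution[where a=a and b=b] by (blast dest: nat_solution_imp_good_sol)

lemma good_sol_unique:
  assumes "good_sol \<mu> F G H N a b xi eta chi" and "good_sol \<mu> F G H N a b xi' eta' chi'" and "N \<le> n"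
  shows "xi n = xi' n \<and> eta n = eta' n \<and> chi n = chi' n"
proof -
  have "(\<lambda>m. zeta (xi (N + int m)) (eta (N + int m)) (chi (N + int m)))
      = (\<lambda>m. zeta (xi' (N + int m)) (eta' (N + int m)) (chi' (N + int m)))"
    using ex1_nat_solution good_sol_imp_nat_solution[OF assms(1)] good_sol_imp_nat_solution[OF assms(2)]
    by blast
  then have "\<forall>m. xi (N + int m) = xi' (N + int m) \<and> eta (N + int m) = eta' (N + int m)
      \<and> chi (N + int m) = chi' (N + int m)"
    by (metis zeta_nth(1,2) zeta_chi_zeta)
  then have "\<forall>n\<ge>N. xi n = xi' n \<and> eta n = eta' n \<and> chi n = chi' n"
    unfolding all_int_ge_iff_all_nat .
  then show ?thesis
    using \<open>N \<le> n\<close> by blast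
qed

end

theorem lemma3:
  fixes \<mu> \<nu> C :: real and N0 :: int
    and F G :: "int \<Rightarrow> real^4" and H :: "int \<Rightarrow> real^4^2"
  assumes "0 < \<mu>" "\<mu> < 1" "0 < \<nu>" "\<nu> < 1" "C > 0"
    and "\<forall>n\<ge>N0. norm (F n) \<le> C * \<nu> powi n"
    and "\<forall>n\<ge>N0. norm (G n) \<le> C * \<nu> powi n"
    and "\<forall>n\<ge>N0. norm (H n) \<le> C * \<nu> powi n"
  shows "\<exists>N\<ge>N0. \<forall>(xi0::real) (chip::real^2).
           (\<exists>xi eta chi. good_sol \<mu> F G H N xi0 chip xi eta chi)
         \<and> (\<forall>xi eta chi xi' eta' chi'.
               good_sol \<mu> F G H N xi0 chip xi eta chi \<longrightarrow>
               good_sol \<mu> F G H N xi0 chip xi' eta' chi' \<longrightarrow>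
               (\<forall>n\<ge>N. xi n = xi' n \<and> eta n = eta' n \<and> chi n = chi' n))"
proof -
  obtain N where "N0 \<le> N" and small:
    "small_perturbation \<mu> \<nu> (C * \<nu> powi N) (\<lambda>j. F (N + int j)) (\<lambda>j. G (N + int j)) (\<lambda>j. H (N + int j))"
    using small_perturbation_tail[OF assms] .
  then show ?thesis
    using good_sol_exists[OF small] good_sol_unique[OF small] by blast
qed

end
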